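(* Let $n\in\mathbb{N}$ with $n\ge2$ and $S:=\{0,\dots,n-1\}$. If $C\subseteq\operatorname{codes}(S)$ is $n$-essential, then for every $m\in\{2,\dots,n-1\}$, with $S_m:=\{0,\dots,m-1\}$, the set \[ C':=\{x{\downarrow_{m-1}} : x\in C,\ \operatorname{center}(x)\le m-2\}\subseteq\operatorname{codes}(S_m) \] is $m$-essential.
   Context: A coronal code over $S$ of length $m$ is a formal string $x=c:p_0p_1\dots p_{m-1}$ with $c,p_i\in S$; $\operatorname{center}(x)=c$, $\operatorname{petals}(x)=\{p_0,\dots,p_{m-1}\}$; codes are identified up to rotation/reversal of the petal string, giving $\operatorname{codes}(S)$. For $a,b,c\in S$ (indeterminates), $c^a_b:=\arccos\!\Big(\frac{(c+a)^2+(c+b)^2-(a+b)^2}{2(c+a)(c+b)}\Big)$, and $\alpha(x):=\sum_{i=0}^{m-1} c^{p_i}_{p_{i+1\bmod m}}$. For $\rho\in(0,\infty)^S$, $\alpha(x)|_\rho$ is the value obtained by substituting $\rho(s)$ for each symbol $s$. For $S=\{0,\dots,n-1\}$, a nonempty $C\subseteq\operatorname{codes}(S)$ is fundamental if $\{\operatorname{center}(x):x\in C\}=\{0,\dots,n-2\}$ and for every nonempty $K\subseteq\{0,\dots,n-2\}$ there is $D\subseteq C$ with $\{\operatorname{center}(x):x\in D\}=K$ and $\big(\bigcup_{x\in D}\operatorname{petals}(x)\big)\setminus K\ne\emptyset$. $C$ is $n$-essential if it is fundamental and there exist nondecreasing maps $\rho,\sigma:S\to(0,\infty)$ with $\alpha(x)|_\rho\le2\pi\le\alpha(x)|_\sigma$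 for all $x\in C$. For a code $x$ over $\{0,\dots,n-1\}$ and $k$, $x{\downarrow_k}$ denotes the code obtained by replacing every symbol of $x$ strictly larger than $k$ by $k$. *)

theory Defs
  imports Complex_Main
begin

text \<open>A raw coronal string c:p_0...p_{m-1} is represented by the pair (c, [p_0,...,p_{m-1}]).
  A coronal code is the equivalence class of such a string under rotation/reversal
  of the petal string.\<close>

type_synonym raw_code = "nat \<times> nat list"
type_synonym code = "raw_code set"

definition code_cls :: "raw_code \<Rightarrow> code" where
  "code_cls x = {(fst x, q) | q. \<exists>k. q = rotate k (snd x) \<or> q = rotate k (rev (snd x))}"

definition codes :: "nat set \<Rightarrow> code set" where
  "codes S = code_cls ` {(c, ps). c \<in> S \<and> set ps \<subseteq> S}"

definition rep :: "code \<Rightarrow> raw_code" where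
  "rep X = (SOME x. x \<in> X)"

definition center :: "code \<Rightarrow> nat" where
  "center X = fst (rep X)"

definition petals :: "code \<Rightarrow> nat set" where
  "petals X = set (snd (rep X))"

definition ang :: "real \<Rightarrow> real \<Rightarrow> real \<Rightarrow> real" where
  "ang c a b = arccos (((c + a)^2 + (c + b)^2 - (a + b)^2) / (2 * (c + a) * (c + b)))"

definition alpha_raw :: "(nat \<Rightarrow> real) \<Rightarrow> raw_code \<Rightarrow> real" where
  "alpha_raw \<rho> x = (let c = fst x; ps = snd x; m = length ps in
     (\<Sum>i<m. ang (\<rho> c) (\<rho> (ps ! i)) (\<rho> (ps ! ((i + 1) mod m)))))"

definition alpha :: "(nat \<Rightarrow> real) \<Rightarrow> code \<Rightarrow> real" where
  "alpha \<rho> X = alpha_raw \<rho> (rep X)"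

definition down_raw :: "nat \<Rightarrow> raw_code \<Rightarrow> raw_code" where
  "down_raw k x = (min (fst x) k, map (\<lambda>p. min p k) (snd x))"

definition down :: "nat \<Rightarrow> code \<Rightarrow> code" where
  "down k X = code_cls (down_raw k (rep X))"

definition fundamental :: "nat \<Rightarrow> code set \<Rightarrow> bool" where
  "fundamental n C \<longleftrightarrow> C \<noteq> {} \<and> center ` C = {0..n-2} \<and>
     (\<forall>K. K \<noteq> {} \<and> K \<subseteq> {0..n-2} \<longrightarrow>
        (\<exists>D\<subseteq>C. center ` D = K \<and> (\<Union>x\<in>D. petals x) - K \<noteq> {}))"

definition essential :: "nat \<Rightarrow> code set \<Rightarrow> bool" where
  "essential n C \<longleftrightarrow> C \<subseteq> codes {0..<n} \<and> fundamental n C \<and>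
     (\<exists>\<rho> \<sigma> :: nat \<Rightarrow> real.
        (\<forall>s\<in>{0..<n}. \<rho> s > 0 \<and> \<sigma> s > 0) \<and>
        mono_on {0..<n} \<rho> \<and> mono_on {0..<n} \<sigma> \<and>
        (\<forall>x\<in>C. alpha \<rho> x \<le> 2 * pi \<and> 2 * pi \<le> alpha \<sigma> x))"

end

theory Submission
  imports Defs
begin

text \<open>Truncation fixes the centres at most m - 2 and only merges petals into the symbol m - 1,
  which lies outside every K \<subseteq> {0..m-2}; hence a separating family D for K stays separating
  after truncation. The angle sum of a code is a cyclic sum of angles c^a_b, each increasing in
  the petal radii a and b. Truncation lowers petals, so it decreases the angle sum for the same
  monotone radii rho; and for the radii that agree with sigma below m - 1 and give m - 1 the
  largest radius sigma(n - 1), it can only increase it.\<close>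

definition cyclic_sum :: "('a \<Rightarrow> 'a \<Rightarrow> 'b::comm_monoid_add) \<Rightarrow> 'a list \<Rightarrow> 'b" where
  "cyclic_sum g ps = (\<Sum>i<length ps. g (ps ! i) (ps ! (Suc i mod length ps)))"

lemma sum_lessThan_shift_periodic:
  fixes f :: "nat \<Rightarrow> 'a::cancel_comm_monoid_add" and m k :: nat
  assumes "\<And>i. f (i + m) = f i"
  shows "(\<Sum>i<m. f (i + k)) = (\<Sum>i<m. f i)"
proof (induction k)
  case (Suc k)
  have "f k + (\<Sum>i<m. f (i + Suc k)) = (\<Sum>i<Suc m. f (i + k))"
    by (subst sum.lessThan_Suc_shift) simp
  also have "\<dots> = f k + (\<Sum>i<m. f (i + k))"
    using assms[of k] by (simp add: add.commute)
  finally show ?case using Suc.IH by simp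
qed simp

lemma Suc_mod_length_less: "i < length xs \<Longrightarrow> Suc i mod length xs < length xs"
  by (cases xs) simp_all

lemma cyclic_sum_periodic:
  "cyclic_sum g ps = (\<Sum>i<length ps. g (ps ! (i mod length ps)) (ps ! (Suc i mod length ps)))"
  unfolding cyclic_sum_def by simp

lemma cyclic_sum_rotate:
  fixes g :: "'a \<Rightarrow> 'a \<Rightarrow> 'b::cancel_comm_monoid_add"
  shows "cyclic_sum g (rotate k ps) = cyclic_sum g ps"
proof -
  let ?m = "length ps"
  let ?P = "\<lambda>i. g (ps ! (i mod ?m)) (ps ! (Suc i mod ?m))"
  have "cyclic_sum g (rotate k ps) = (\<Sum>i<?m. ?P (i + k))"
    unfolding cyclic_sum_def length_rotate
  proof (rule sum.cong)
    fix i assume "i \<in> {..<?m}"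
    then have i: "i < ?m" by simp
    have "(k + Suc i mod ?m) mod ?m = Suc (i + k) mod ?m"
      by (simp add: mod_add_right_eq add.commute)
    then show "g (rotate k ps ! i) (rotate k ps ! (Suc i mod ?m)) = ?P (i + k)"
      using i Suc_mod_length_less[OF i] by (simp add: nth_rotate add.commute)
  qed simp
  also have "\<dots> = (\<Sum>i<?m. ?P i)"
    by (rule sum_lessThan_shift_periodic) (simp flip: add_Suc)
  finally show ?thesis by (simp add: cyclic_sum_periodic)
qed

lemma cyclic_sum_rev:
  fixes g :: "'a \<Rightarrow> 'a \<Rightarrow> 'b::cancel_comm_monoid_add"
  assumes "\<And>a b. g a b = g b a"
  shows "cyclic_sum g (rev ps) = cyclic_sum g ps"
proof -
  let ?m = "length ps"
  let ?P = "\<lambda>i. g (ps ! (i mod ?m)) (ps ! (Suc i mod ?m))"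
  have "cyclic_sum g (rev ps) = (\<Sum>j<?m. g (rev ps ! (?m - Suc j)) (rev ps ! (Suc (?m - Suc j) mod ?m)))"
    unfolding cyclic_sum_def length_rev by (rule sum.nat_diff_reindex[symmetric])
  also have "\<dots> = (\<Sum>j<?m. ?P (j + (?m - 1)))"
  proof (rule sum.cong)
    fix j assume "j \<in> {..<?m}"
    then have j: "j < ?m" by simp
    show "g (rev ps ! (?m - Suc j)) (rev ps ! (Suc (?m - Suc j) mod ?m)) = ?P (j + (?m - 1))"
    proof (cases j)
      case 0
      then show ?thesis using j by (simp add: rev_nth assms)
    next
      case (Suc j')
      have "j + (?m - 1) = j' + ?m" using j Suc by simp
      then have "(j + (?m - 1)) mod ?m = j'" "Suc (j + (?m - 1)) mod ?m = j"
        using j Suc by (simp_all flip: add_Suc)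
      moreover have "Suc (?m - Suc j) mod ?m = ?m - j" "?m - j < ?m" "?m - Suc (?m - j) = j'"
        using j Suc by simp_all
      ultimately show ?thesis using j by (simp add: rev_nth assms)
    qed
  qed simp
  also have "\<dots> = (\<Sum>i<?m. ?P i)"
    by (rule sum_lessThan_shift_periodic) (simp flip: add_Suc)
  finally show ?thesis by (simp add: cyclic_sum_periodic)
qed

lemma cyclic_sum_map: "cyclic_sum g (map f ps) = cyclic_sum (\<lambda>a b. g (f a) (f b)) ps"
  unfolding cyclic_sum_def by (intro sum.cong) (simp_all add: Suc_mod_length_less)

lemma cyclic_sum_mono:
  fixes g h :: "'a \<Rightarrow> 'a \<Rightarrow> 'b::ordered_comm_monoid_add"
  assumes "\<And>a b. a \<in> set ps \<Longrightarrow> b \<in> set ps \<Longrightarrow> g a b \<le> h a b"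
  shows "cyclic_sum g ps \<le> cyclic_sum h ps"
  unfolding cyclic_sum_def by (intro sum_mono assms) (simp_all add: Suc_mod_length_less)


lemma ang_sym: "ang c a b = ang c b a"
  unfolding ang_def by (simp add: algebra_simps)

lemma ang_eq_arccos:
  assumes "0 < c" "0 < a" "0 < b"
  shows "ang c a b = arccos (1 - 2 * (a / (c + a)) * (b / (c + b)))"
proof -
  have "((c + a)\<^sup>2 + (c + b)\<^sup>2 - (a + b)\<^sup>2) / (2 * (c + a) * (c + b))
      = 1 - 2 * (a / (c + a)) * (b / (c + b))"
    using assms by (simp add: divide_simps power2_eq_square) (simp add: algebra_simps)
  then show ?thesis
    unfolding ang_def by simp
qed

lemma ang_mono:
  assumes "0 < c" "0 < a" "0 < b" "a \<le> a'" "b \<le> b'"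
  shows "ang c a b \<le> ang c a' b'"
proof -
  define t where "t x = x / (c + x)" for x
  have t_mono: "t x \<le> t y" if "0 < x" "x \<le> y" for x y
    using that assms(1) unfolding t_def by (simp add: divide_simps algebra_simps mult_left_mono)
  have t_bounds: "0 \<le> t x \<and> t x \<le> 1" if "0 < x" for x
    using that assms(1) unfolding t_def by (simp add: divide_simps)
  have "t a * t b \<le> t a' * t b'"
    using assms t_mono t_bounds by (intro mult_mono) auto
  moreover have "0 \<le> t a * t b" "t a' * t b' \<le> 1"
    using assms t_bounds by (auto intro: mult_le_one)
  moreover have "0 < a'" "0 < b'"
    using assms by simp_all
  ultimately show ?thesis
    unfolding ang_eq_arccos[OF assms(1-3)] ang_eq_arccos[OF assms(1) \<open>0 < a'\<close> \<open>0 < b'\<close>]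
    by (intro arccos_le_arccos) (simp_all add: t_def)
qed

lemma rep_in_code_cls: "rep (code_cls y) \<in> code_cls y"
  unfolding rep_def
proof (rule someI)
  show "y \<in> code_cls y"
    unfolding code_cls_def by (cases y) (auto intro: exI[of _ 0])
qed

lemma code_cls_memD:
  assumes "z \<in> code_cls y"
  shows "fst z = fst y \<and> (\<exists>k. snd z = rotate k (snd y) \<or> snd z = rotate k (rev (snd y)))"
  using assms unfolding code_cls_def by auto

lemma alpha_raw_eq_cyclic_sum:
  "alpha_raw \<rho> z = cyclic_sum (\<lambda>a b. ang (\<rho> (fst z)) (\<rho> a) (\<rho> b)) (snd z)"
  unfolding alpha_raw_def cyclic_sum_def Let_def by simp

lemma alpha_eq_cyclic_sum:
  "alpha \<rho> X = cyclic_sum (\<lambda>a b. ang (\<rho> (center X)) (\<rho> a) (\<rho> b)) (snd (rep X))"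
  unfolding alpha_def alpha_raw_eq_cyclic_sum center_def ..

lemma alpha_code_cls: "alpha \<rho> (code_cls y) = alpha_raw \<rho> y"
proof -
  obtain k where "fst (rep (code_cls y)) = fst y"
    and "snd (rep (code_cls y)) = rotate k (snd y) \<or> snd (rep (code_cls y)) = rotate k (rev (snd y))"
    using code_cls_memD[OF rep_in_code_cls] by blast
  then show ?thesis
    unfolding alpha_def alpha_raw_eq_cyclic_sum
    by (auto simp: cyclic_sum_rotate cyclic_sum_rev ang_sym)
qed

lemma center_code_cls: "center (code_cls y) = fst y"
  unfolding center_def using code_cls_memD[OF rep_in_code_cls] by blast

lemma petals_code_cls: "petals (code_cls y) = set (snd y)"
  unfolding petals_def using code_cls_memD[OF rep_in_code_cls, of y] by auto

lemma rep_in_codes: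
  assumes "X \<in> codes S"
  shows "fst (rep X) \<in> S" "set (snd (rep X)) \<subseteq> S"
proof -
  obtain y where "X = code_cls y" "fst y \<in> S" "set (snd y) \<subseteq> S"
    using assms unfolding codes_def by auto
  with code_cls_memD[OF rep_in_code_cls[of y]]
  show "fst (rep X) \<in> S" "set (snd (rep X)) \<subseteq> S" by auto
qed

lemma center_down: "center (down k X) = min (center X) k"
  unfolding down_def center_code_cls by (simp add: down_raw_def center_def)

lemma petals_down: "petals (down k X) = (\<lambda>p. min p k) ` petals X"
  unfolding down_def petals_code_cls by (simp add: down_raw_def petals_def)

lemma alpha_down:
  "alpha \<rho> (down k X) =
     cyclic_sum (\<lambda>a b. ang (\<rho> (min (center X) k)) (\<rho> (min a k)) (\<rho> (min b k))) (snd (rep X))"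
  unfolding down_def alpha_code_cls alpha_raw_eq_cyclic_sum down_raw_def center_def
  by (simp add: cyclic_sum_map)

lemma down_in_codes: "down k X \<in> codes {0..<Suc k}"
  unfolding down_def codes_def by (rule imageI) (auto simp: down_raw_def)

lemma alpha_down_le:
  assumes "X \<in> codes S" "center X \<le> k"
    and "\<And>s. s \<in> S \<Longrightarrow> 0 < \<rho> (min s k) \<and> \<rho> (min s k) \<le> \<rho> s"
  shows "alpha \<rho> (down k X) \<le> alpha \<rho> X"
proof -
  have "0 < \<rho> (center X)"
    using assms rep_in_codes(1)[OF assms(1)] unfolding center_def by (metis min.absorb1)
  then show ?thesis
    unfolding alpha_down unfolding alpha_eq_cyclic_sum min_absorb1[OF assms(2)]
    using assms rep_in_codes(2)[OF assms(1)] by (intro cyclic_sum_mono ang_mono) auto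
qed

lemma alpha_le_alpha_down:
  assumes "X \<in> codes S" "center X \<le> k" "\<sigma>' (center X) = \<sigma> (center X)"
    and "\<And>s. s \<in> S \<Longrightarrow> 0 < \<sigma> s \<and> \<sigma> s \<le> \<sigma>' (min s k)"
  shows "alpha \<sigma> X \<le> alpha \<sigma>' (down k X)"
proof -
  have "0 < \<sigma> (center X)"
    using assms rep_in_codes(1)[OF assms(1)] unfolding center_def by blast
  then show ?thesis
    unfolding alpha_down unfolding alpha_eq_cyclic_sum min_absorb1[OF assms(2)] assms(3)
    using assms rep_in_codes(2)[OF assms(1)] by (intro cyclic_sum_mono ang_mono) auto
qed

definition truncation :: "nat \<Rightarrow> code set \<Rightarrow> code set" where
  "truncation m C = down (m - 1) ` {x \<in> C. center x \<le> m - 2}"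

lemma Collect_down_eq_truncation:
  "{down (m - 1) x | x. x \<in> C \<and> center x \<le> m - 2} = truncation m C"
  unfolding truncation_def by blast

lemma truncation_subset_codes:
  assumes "0 < m"
  shows "truncation m C \<subseteq> codes {0..<m}"
  using assms down_in_codes[of "m - 1"] unfolding truncation_def by auto

lemma fundamental_truncation:
  assumes fund: "fundamental n C" and "2 \<le> m" "m \<le> n"
  shows "fundamental m (truncation m C)"
proof -
  have centers_C: "center ` C = {0..n-2}"
    and separating: "\<And>K. K \<noteq> {} \<Longrightarrow> K \<subseteq> {0..n-2} \<Longrightarrow>
      \<exists>D\<subseteq>C. center ` D = K \<and> (\<Union>x\<in>D. petals x) - K \<noteq> {}"
    using fund unfolding fundamental_def by blast+
  have center_down_eq: "center (down (m - 1) x) = center x" if "center x \<le> m - 2" for x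
    using that assms by (simp add: center_down)
  have center_down_image: "center ` down (m - 1) ` D = center ` D"
    if "center ` D \<subseteq> {0..m-2}" for D
    unfolding image_image using that center_down_eq by (intro image_cong) auto
  have "center ` truncation m C = center ` {x \<in> C. center x \<le> m - 2}"
    unfolding truncation_def by (rule center_down_image) auto
  also have "\<dots> = {c \<in> center ` C. c \<le> m - 2}"
    by blast
  also have "\<dots> = {0..m-2}"
    unfolding centers_C using assms by auto
  finally have centers: "center ` truncation m C = {0..m-2}" .
  show ?thesis
    unfolding fundamental_def
  proof (intro conjI allI impI)
    show "truncation m C \<noteq> {}" and "center ` truncation m C = {0..m-2}"
      using centers by auto
    fix K assume K: "K \<noteq> {} \<and> K \<subseteq> {0..m-2}"
    have "K \<subseteq> {0..n-2}"
      using K assms by auto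
    with separating K obtain D where D: "D \<subseteq> C" "center ` D = K" "(\<Union>x\<in>D. petals x) - K \<noteq> {}"
      by meson
    then obtain x p where xp: "x \<in> D" "p \<in> petals x" "p \<notin> K"
      by blast
    have "min p (m - 1) \<in> petals (down (m - 1) x) - K"
      using xp K assms by (auto simp: petals_down min_def)
    moreover have "down (m - 1) ` D \<subseteq> truncation m C"
      using D K unfolding truncation_def by (intro image_mono) auto
    moreover have "center ` down (m - 1) ` D = K"
      using D K center_down_image by auto
    ultimately show "\<exists>D'\<subseteq>truncation m C. center ` D' = K \<and> (\<Union>x\<in>D'. petals x) - K \<noteq> {}"
      using xp by blast
  qed
qed

lemma angle_bounds_truncation:
  assumes "C \<subseteq> codes {0..<n}" "2 \<le> m" "m \<le> n"
    and pos: "\<forall>s\<in>{0..<n}. 0 < \<rho> s \<and> 0 < \<sigma> s"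
    and mono: "mono_on {0..<n} \<rho>" "mono_on {0..<n} \<sigma>"
    and bounds: "\<forall>x\<in>C. alpha \<rho> x \<le> 2 * pi \<and> 2 * pi \<le> alpha \<sigma> x"
  shows "\<exists>\<rho>' \<sigma>' :: nat \<Rightarrow> real.
           (\<forall>s\<in>{0..<m}. 0 < \<rho>' s \<and> 0 < \<sigma>' s) \<and> mono_on {0..<m} \<rho>' \<and> mono_on {0..<m} \<sigma>' \<and>
           (\<forall>x\<in>truncation m C. alpha \<rho>' x \<le> 2 * pi \<and> 2 * pi \<le> alpha \<sigma>' x)"
proof -
  \<comment> \<open>The merged symbol m - 1 gets the top radius, so truncated petals can only grow under sigma'.\<close>
  define \<sigma>' where "\<sigma>' s = (if s < m - 1 then \<sigma> s else \<sigma> (n - 1))" for s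
  have \<rho>_down: "0 < \<rho> (min s (m - 1)) \<and> \<rho> (min s (m - 1)) \<le> \<rho> s" if "s \<in> {0..<n}" for s
    using that assms by (auto intro: mono_onD[OF mono(1)])
  have \<sigma>_up: "0 < \<sigma> s \<and> \<sigma> s \<le> \<sigma>' (min s (m - 1))" if "s \<in> {0..<n}" for s
    using that assms unfolding \<sigma>'_def by (auto intro: mono_onD[OF mono(2)])
  have "alpha \<rho> x \<le> 2 * pi \<and> 2 * pi \<le> alpha \<sigma>' x" if x: "x \<in> truncation m C" for x
  proof -
    obtain y where y: "x = down (m - 1) y" "y \<in> C" "center y \<le> m - 2"
      using x unfolding truncation_def by blast
    have "center y \<le> m - 1" "\<sigma>' (center y) = \<sigma> (center y)"
      using y(3) assms unfolding \<sigma>'_def by auto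
    then have "alpha \<rho> x \<le> alpha \<rho> y" "alpha \<sigma> y \<le> alpha \<sigma>' x"
      using y assms \<rho>_down \<sigma>_up
      by (auto intro!: alpha_down_le[of y "{0..<n}"] alpha_le_alpha_down[of y "{0..<n}"])
    then show ?thesis
      using bounds y(2) by fastforce
  qed
  moreover have "\<forall>s\<in>{0..<m}. 0 < \<rho> s \<and> 0 < \<sigma>' s"
    using pos assms unfolding \<sigma>'_def by auto
  moreover have "mono_on {0..<m} \<rho>" "mono_on {0..<m} \<sigma>'"
    using assms unfolding \<sigma>'_def
    by (auto intro!: mono_onI mono_onD[OF mono(1)] mono_onD[OF mono(2)])
  ultimately show ?thesis by blast
qed

lemma essential_truncation:
  assumes "essential n C" "2 \<le> m" "m \<le> n"
  shows "essential m (truncation m C)"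
proof -
  obtain \<rho> \<sigma> :: "nat \<Rightarrow> real" where
      "\<forall>s\<in>{0..<n}. 0 < \<rho> s \<and> 0 < \<sigma> s" "mono_on {0..<n} \<rho>" "mono_on {0..<n} \<sigma>"
      "\<forall>x\<in>C. alpha \<rho> x \<le> 2 * pi \<and> 2 * pi \<le> alpha \<sigma> x"
    using assms(1) unfolding essential_def by blast
  then have "\<exists>\<rho>' \<sigma>' :: nat \<Rightarrow> real.
           (\<forall>s\<in>{0..<m}. 0 < \<rho>' s \<and> 0 < \<sigma>' s) \<and> mono_on {0..<m} \<rho>' \<and> mono_on {0..<m} \<sigma>' \<and>
           (\<forall>x\<in>truncation m C. alpha \<rho>' x \<le> 2 * pi \<and> 2 * pi \<le> alpha \<sigma>' x)"
    using angle_bounds_truncation assms unfolding essential_def by blast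
  moreover have "fundamental m (truncation m C)" "truncation m C \<subseteq> codes {0..<m}"
    using fundamental_truncation truncation_subset_codes assms unfolding essential_def by auto
  ultimately show ?thesis
    unfolding essential_def by blast
qed

theorem lemma6p3:
  fixes n :: nat and C :: "code set"
  assumes "n \<ge> 2"
    and "C \<subseteq> codes {0..<n}"
    and "essential n C"
  shows "\<forall>m\<in>{2..n-1}.
           {down (m - 1) x | x. x \<in> C \<and> center x \<le> m - 2} \<subseteq> codes {0..<m} \<and>
           essential m {down (m - 1) x | x. x \<in> C \<and> center x \<le> m - 2}"
  unfolding Collect_down_eq_truncation
proof
  fix m assume "m \<in> {2..n-1}"
  then have "2 \<le> m" "m \<le> n" by auto
  then show "truncation m C \<subseteq> codes {0..<m} \<and> essential m (truncation m C)"
    using truncation_subset_codes essential_truncation assms(3) by simp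
qed

end
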